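(* Let $X$ and $Y$ be non-negative absolutely continuous random variables with PDFs $f$ and $g$. Let $r>0$, $r\ne1$, $0<\alpha<\infty$, $\alpha\ne1$, $\beta>0$. Let $Y_{E,r}$ be the generalized escort random variable with PDF $\frac{f^r(x)g^{1-r}(x)}{\int_0^\infty f^r(t)g^{1-r}(t)\,dt}$, $x>0$, and let $X_{e,\alpha}$, $Y_{e,\alpha}$ be the escort random variables with PDFs $\frac{f^\alpha(x)}{\int_0^\infty f^\alpha(t)dt}$ and $\frac{g^\alpha(x)}{\int_0^\infty g^\alpha(t)dt}$, respectively. Then $$R^\alpha_\beta(Y_{E,r})\,RD^r_{\alpha\beta-\alpha+1}(X,Y)=(1-\alpha)\,R^\alpha_{r\beta-r+1}(X)\,R^\alpha_{(1-r)(\beta-1)+1}(Y)\,RD^r_\beta(X_{e,\alpha},Y_{e,\alpha}).$$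
   Context: For a non-negative absolutely continuous random variable $Z$ with PDF $h$, the Rényi information generating function is $R^a_b(Z)=\frac{1}{1-a}\left(\int_0^\infty h^a(x)\,dx\right)^{b-1}$ ($a>0$, $a\ne1$, $b>0$). For non-negative absolutely continuous random variables $U,V$ with PDFs $u,v$, the Rényi divergence information generating function is $RD^a_b(U,V)=\frac{1}{a-1}\left(\int_0^\infty u^a(x)v^{1-a}(x)\,dx\right)^{b-1}$ ($a>0$, $a\ne1$, $b>0$). All integrals are assumed to exist, be finite and positive. *)

theory Defs
  imports "HOL-Analysis.Analysis"
begin

text \<open>Random variables are represented by their PDFs h :: real \<Rightarrow> real on [0,\<infinity>).\<close>

definition is_pdf :: "(real \<Rightarrow> real) \<Rightarrow> bool" where
  "is_pdf h \<longleftrightarrow> (\<forall>x. 0 \<le> h x) \<and> h integrable_on {0..} \<and> integral {0..} h = 1"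

definition renyi_igf :: "real \<Rightarrow> real \<Rightarrow> (real \<Rightarrow> real) \<Rightarrow> real" where
  "renyi_igf a b h = 1 / (1 - a) * (integral {0..} (\<lambda>x. h x powr a)) powr (b - 1)"

definition renyi_div_igf :: "real \<Rightarrow> real \<Rightarrow> (real \<Rightarrow> real) \<Rightarrow> (real \<Rightarrow> real) \<Rightarrow> real" where
  "renyi_div_igf a b u v =
     1 / (a - 1) * (integral {0..} (\<lambda>x. u x powr a * v x powr (1 - a))) powr (b - 1)"

definition escort_pdf :: "real \<Rightarrow> (real \<Rightarrow> real) \<Rightarrow> real \<Rightarrow> real" where
  "escort_pdf a f = (\<lambda>x. f x powr a / integral {0..} (\<lambda>t. f t powr a))"

definition gen_escort_pdf :: "real \<Rightarrow> (real \<Rightarrow> real) \<Rightarrow> (real \<Rightarrow> real) \<Rightarrow> real \<Rightarrow> real" where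
  "gen_escort_pdf r f g = (\<lambda>x. f x powr r * g x powr (1 - r) /
       integral {0..} (\<lambda>t. f t powr r * g t powr (1 - r)))"

end

theory Submission
  imports Defs
begin

text \<open>Both sides equal \<open>E^(\<beta> - 1) / ((1 - \<alpha>)(r - 1))\<close> with \<open>E = \<integral> f^(r\<alpha>) g^((1 - r)\<alpha>)\<close>:
  raising the generalized escort density to the power \<open>\<alpha>\<close>, and mixing the two escort densities
  with weights \<open>r, 1 - r\<close>, both produce this integrand, divided by \<open>C^\<alpha>\<close> resp. \<open>A^r B^(1 - r)\<close>
  where \<open>A, B, C\<close> are the normalising constants, and these powers cancel against the other
  factors.\<close>

definition power_product_integral :: "real \<Rightarrow> (real \<Rightarrow> real) \<Rightarrow> real \<Rightarrow> (real \<Rightarrow> real) \<Rightarrow> real"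
  where "power_product_integral p f q g = integral {0..} (\<lambda>x. f x powr p * g x powr q)"

lemma gen_escort_pdf_powr:
  "gen_escort_pdf r f g x powr a =
     f x powr (r * a) * g x powr ((1 - r) * a) / power_product_integral r f (1 - r) g powr a"
  by (simp add: gen_escort_pdf_def power_product_integral_def powr_divide powr_mult powr_powr)

lemma escort_pdf_powr_mult:
  "escort_pdf a f x powr r * escort_pdf a g x powr (1 - r) =
     f x powr (r * a) * g x powr ((1 - r) * a)
       / (integral {0..} (\<lambda>t. f t powr a) powr r * integral {0..} (\<lambda>t. g t powr a) powr (1 - r))"
  by (simp add: escort_pdf_def powr_divide powr_powr mult.commute)

lemma renyi_igf_gen_escort_pdf:
  "renyi_igf a b (gen_escort_pdf r f g) =
     power_product_integral (r * a) f ((1 - r) * a) g powr (b - 1)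
       / ((1 - a) * power_product_integral r f (1 - r) g powr (a * (b - 1)))"
  by (simp add: renyi_igf_def gen_escort_pdf_powr power_product_integral_def[of "r * a"]
      powr_divide powr_powr)

lemma renyi_div_igf_escort_pdf:
  "renyi_div_igf r b (escort_pdf a f) (escort_pdf a g) =
     power_product_integral (r * a) f ((1 - r) * a) g powr (b - 1)
       / ((r - 1) * integral {0..} (\<lambda>t. f t powr a) powr (r * (b - 1))
                  * integral {0..} (\<lambda>t. g t powr a) powr ((1 - r) * (b - 1)))"
  by (simp add: renyi_div_igf_def escort_pdf_powr_mult power_product_integral_def
      powr_divide powr_mult powr_powr mult.assoc)

theorem proposition3p2:
  fixes f g :: "real \<Rightarrow> real" and r \<alpha> \<beta> :: real
  assumes pdf_f: "is_pdf f" and pdf_g: "is_pdf g"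
    and r: "r > 0" "r \<noteq> 1"
    and \<alpha>: "\<alpha> > 0" "\<alpha> \<noteq> 1"
    and \<beta>: "\<beta> > 0"
    and int_fa: "(\<lambda>x. f x powr \<alpha>) integrable_on {0..}"
    and pos_fa: "integral {0..} (\<lambda>x. f x powr \<alpha>) > 0"
    and int_ga: "(\<lambda>x. g x powr \<alpha>) integrable_on {0..}"
    and pos_ga: "integral {0..} (\<lambda>x. g x powr \<alpha>) > 0"
    and int_fg: "(\<lambda>x. f x powr r * g x powr (1 - r)) integrable_on {0..}"
    and pos_fg: "integral {0..} (\<lambda>x. f x powr r * g x powr (1 - r)) > 0"
    and int_E: "(\<lambda>x. gen_escort_pdf r f g x powr \<alpha>) integrable_on {0..}"
    and pos_E: "integral {0..} (\<lambda>x. gen_escort_pdf r f g x powr \<alpha>) > 0"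
    and int_e: "(\<lambda>x. escort_pdf \<alpha> f x powr r * escort_pdf \<alpha> g x powr (1 - r)) integrable_on {0..}"
    and pos_e: "integral {0..} (\<lambda>x. escort_pdf \<alpha> f x powr r * escort_pdf \<alpha> g x powr (1 - r)) > 0"
  shows "renyi_igf \<alpha> \<beta> (gen_escort_pdf r f g) * renyi_div_igf r (\<alpha> * \<beta> - \<alpha> + 1) f g
       = (1 - \<alpha>) * renyi_igf \<alpha> (r * \<beta> - r + 1) f * renyi_igf \<alpha> ((1 - r) * (\<beta> - 1) + 1) g
         * renyi_div_igf r \<beta> (escort_pdf \<alpha> f) (escort_pdf \<alpha> g)"
proof -
  define A where "A = integral {0..} (\<lambda>x. f x powr \<alpha>) powr (r * (\<beta> - 1))"
  define B where "B = integral {0..} (\<lambda>x. g x powr \<alpha>) powr ((1 - r) * (\<beta> - 1))"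
  define C where "C = power_product_integral r f (1 - r) g powr (\<alpha> * (\<beta> - 1))"
  define E where "E = power_product_integral (r * \<alpha>) f ((1 - r) * \<alpha>) g"
  have "A > 0" "B > 0" "C > 0"
    using pos_fa pos_ga pos_fg by (simp_all add: A_def B_def C_def power_product_integral_def)
  have "1 - \<alpha> \<noteq> 0" "r - 1 \<noteq> 0"
    using \<alpha>(2) r(2) by auto
  have "renyi_igf \<alpha> \<beta> (gen_escort_pdf r f g) * renyi_div_igf r (\<alpha> * \<beta> - \<alpha> + 1) f g
      = E powr (\<beta> - 1) / ((1 - \<alpha>) * C) * (C / (r - 1))"
    by (simp add: renyi_igf_gen_escort_pdf renyi_div_igf_def E_def C_def
        power_product_integral_def algebra_simps)
  also have "\<dots> = E powr (\<beta> - 1) / ((1 - \<alpha>) * (r - 1))"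
    using \<open>C > 0\<close> by simp
  also have "\<dots> = (1 - \<alpha>) * (A / (1 - \<alpha>)) * (B / (1 - \<alpha>)) * (E powr (\<beta> - 1) / ((r - 1) * A * B))"
    using \<open>1 - \<alpha> \<noteq> 0\<close> \<open>r - 1 \<noteq> 0\<close> \<open>A > 0\<close> \<open>B > 0\<close> by (simp add: divide_simps)
  also have "\<dots> = (1 - \<alpha>) * renyi_igf \<alpha> (r * \<beta> - r + 1) f * renyi_igf \<alpha> ((1 - r) * (\<beta> - 1) + 1) g
       * renyi_div_igf r \<beta> (escort_pdf \<alpha> f) (escort_pdf \<alpha> g)"
    by (simp add: renyi_igf_def renyi_div_igf_escort_pdf A_def B_def E_def algebra_simps)
  finally show ?thesis .
qed

end
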